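(* Let $\gamma\in\mathbb{R}$ and $|a|$ small. For every $\tau\in(-1/2,1/2]\setminus\{0\}$, the $L^2(\mathbb{T})$-spectrum of $\mathcal H_a(\gamma,\tau)$ is symmetric with respect to reflection through the imaginary axis: if $\mu$ is in the spectrum, so is $-\overline{\mu}$.
   Context: Here $\rho,\phi\in\mathbb{R}$, $k>0$, and $w$, $c$ describe the small-amplitude periodic traveling wave of the Konopelchenko–Dubrovsky equation: $w$ is smooth, real, even and $2\pi$-periodic, $w(z)=a\cos z+a^2(A_0+A_2\cos 2z)+a^3A_3\cos 3z+O(a^4)$, $c=k^2+a^2c_2+O(a^4)$, with $A_0=-\frac{3\rho}{2k^2}$, $A_2=\frac{\rho}{2k^2}$, $A_3=-\frac{\phi^2}{64k^2}+\frac{3\rho^2}{16k^4}$, $c_2=\frac{3\phi^2}{8}+\frac{15\rho^2}{2k^2}$. The operator $\mathcal H_a(\gamma,\tau)=kc(\partial_z+i\tau)+k^3(\partial_z+i\tau)^3+6k\rho(\partial_z+i\tau)(w\,\cdot)-\tfrac32\phi^2k(\partial_z+i\tau)(w^2\,\cdot)-\big(\frac{3\gamma^2}{k}+3i\phi\gamma w_z\big)(\partial_z+i\tau)^{-1}$ acts in $L^2(\mathbb{T})$ ($2\pi$-periodic square-integrable functions). *)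

theory Defs
  imports "HOL-Analysis.Analysis"
begin

definition per2pi :: "(real \<Rightarrow> 'a) \<Rightarrow> bool" where
  "per2pi f \<longleftrightarrow> (\<forall>x. f (x + 2 * pi) = f x)"

text \<open>Elements of L2(T), represented by 2pi-periodic complex functions that are
  measurable and square integrable over one period; they are identified when equal
  almost everywhere.\<close>
definition L2T :: "(real \<Rightarrow> complex) \<Rightarrow> bool" where
  "L2T f \<longleftrightarrow> per2pi f \<and> f measurable_on {0..2*pi}
      \<and> (\<lambda>x. (cmod (f x))^2) integrable_on {0..2*pi}"

definition L2norm :: "(real \<Rightarrow> complex) \<Rightarrow> real" where
  "L2norm f = sqrt (integral {0..2*pi} (\<lambda>x. (cmod (f x))^2))"

definition ae_eq :: "(real \<Rightarrow> complex) \<Rightarrow> (real \<Rightarrow> complex) \<Rightarrow> bool" where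
  "ae_eq f g \<longleftrightarrow> negligible {x \<in> {0..2*pi}. f x \<noteq> g x}"

text \<open>Periodic Sobolev space H^3(T): f is C^2 with derivatives f1, f2, and f2 is
  absolutely continuous with (a.e.) derivative f3 in L2(T).\<close>
definition H3T :: "(real \<Rightarrow> complex) \<Rightarrow> (real \<Rightarrow> complex) \<Rightarrow> (real \<Rightarrow> complex)
     \<Rightarrow> (real \<Rightarrow> complex) \<Rightarrow> bool" where
  "H3T f f1 f2 f3 \<longleftrightarrow> per2pi f
     \<and> (\<forall>x. (f has_vector_derivative f1 x) (at x))
     \<and> (\<forall>x. (f1 has_vector_derivative f2 x) (at x))
     \<and> L2T f3
     \<and> (\<forall>x y. x \<le> y \<longrightarrow> (f3 has_integral (f2 y - f2 x)) {x..y})"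

definition smooth_fun :: "(real \<Rightarrow> real) \<Rightarrow> bool" where
  "smooth_fun u \<longleftrightarrow> (\<exists>D. D 0 = u \<and> (\<forall>n x. (D n has_real_derivative D (Suc n) x) (at x)))"

text \<open>The inverse of (d/dz + i tau) on (continuous) 2pi-periodic functions,
  tau not an integer: the unique periodic solution F of F' + i tau F = f.\<close>
definition Dinv :: "real \<Rightarrow> (real \<Rightarrow> complex) \<Rightarrow> (real \<Rightarrow> complex)" where
  "Dinv \<tau> f = (THE F. per2pi F \<and>
      (\<forall>x. (F has_vector_derivative (f x - \<i> * complex_of_real \<tau> * F x)) (at x)))"

text \<open>The operator H_a(gamma,tau) applied to f in H^3(T) (with derivatives f1,f2,f3),
  written with D = d/dz + i tau:
  kc D f + k^3 D^3 f + 6 k rho D(w f) - 3/2 phi^2 k D(w^2 f)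
   - (3 gamma^2/k + 3 i phi gamma w_z) D^{-1} f.\<close>
definition Hop :: "real \<Rightarrow> real \<Rightarrow> real \<Rightarrow> real \<Rightarrow> real \<Rightarrow> (real \<Rightarrow> real) \<Rightarrow> real
     \<Rightarrow> (real \<Rightarrow> complex) \<Rightarrow> (real \<Rightarrow> complex) \<Rightarrow> (real \<Rightarrow> complex) \<Rightarrow> (real \<Rightarrow> complex)
     \<Rightarrow> (real \<Rightarrow> complex)" where
  "Hop k c \<rho> \<phi> \<gamma> w \<tau> f f1 f2 f3 = (\<lambda>x.
     let t = complex_of_real \<tau>; W = complex_of_real (w x);
         Wz = complex_of_real (deriv w x);
         Df = f1 x + \<i> * t * f x;
         D3f = f3 x + 3 * \<i> * t * f2 x - 3 * t^2 * f1 x - \<i> * t^3 * f x;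
         Dwf = Wz * f x + W * f1 x + \<i> * t * W * f x;
         Dw2f = 2 * W * Wz * f x + W^2 * f1 x + \<i> * t * W^2 * f x
     in complex_of_real (k * c) * Df + complex_of_real (k^3) * D3f
        + complex_of_real (6 * k * \<rho>) * Dwf
        - complex_of_real (3/2 * \<phi>^2 * k) * Dw2f
        - (complex_of_real (3 * \<gamma>^2 / k) + 3 * \<i> * complex_of_real (\<phi> * \<gamma>) * Wz)
            * Dinv \<tau> f x)"

definition resolvent_H :: "real \<Rightarrow> real \<Rightarrow> real \<Rightarrow> real \<Rightarrow> real \<Rightarrow> (real \<Rightarrow> real) \<Rightarrow> real
     \<Rightarrow> complex set" where
  "resolvent_H k c \<rho> \<phi> \<gamma> w \<tau> = {\<mu>.
     (\<forall>g. L2T g \<longrightarrow> (\<exists>f f1 f2 f3. H3T f f1 f2 f3 \<and>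
          ae_eq (\<lambda>x. Hop k c \<rho> \<phi> \<gamma> w \<tau> f f1 f2 f3 x - \<mu> * f x) g))
   \<and> (\<forall>f f1 f2 f3. H3T f f1 f2 f3 \<longrightarrow>
          ae_eq (\<lambda>x. Hop k c \<rho> \<phi> \<gamma> w \<tau> f f1 f2 f3 x - \<mu> * f x) (\<lambda>x. 0) \<longrightarrow>
          ae_eq f (\<lambda>x. 0))
   \<and> (\<exists>C. \<forall>f f1 f2 f3. H3T f f1 f2 f3 \<longrightarrow>
          L2norm f \<le> C * L2norm (\<lambda>x. Hop k c \<rho> \<phi> \<gamma> w \<tau> f f1 f2 f3 x - \<mu> * f x))}"

definition spectrum_H :: "real \<Rightarrow> real \<Rightarrow> real \<Rightarrow> real \<Rightarrow> real \<Rightarrow> (real \<Rightarrow> real) \<Rightarrow> real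
     \<Rightarrow> complex set" where
  "spectrum_H k c \<rho> \<phi> \<gamma> w \<tau> = - resolvent_H k c \<rho> \<phi> \<gamma> w \<tau>"

end

theory Submission
  imports Defs
begin

text \<open>Let R f (z) = conj (f (2 pi - z)), the conjugated reflection z \<mapsto> -z of the torus.
  It is an antilinear isometric involution of L2(T) that preserves H^3(T), and it anticommutes
  with D = d/dz + i tau; by uniqueness of periodic solutions (tau not an integer) it therefore
  also anticommutes with D^-1. As w is real and even, this gives
  (H + conj mu) R = - R (H - mu), so R transports solvability, injectivity and the resolvent
  bound of H - mu to H + conj mu.\<close>

text \<open>The factor sigma is the sign picked up by odd derivatives; reflecting about pi instead
  of 0 keeps the period interval [0, 2 pi] invariant.\<close>
definition conj_reflect :: "real \<Rightarrow> (real \<Rightarrow> complex) \<Rightarrow> real \<Rightarrow> complex" where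
  "conj_reflect \<sigma> h x = complex_of_real \<sigma> * cnj (h (2*pi - x))"

lemma conj_reflect_conj_reflect:
  assumes "\<bar>\<sigma>\<bar> = 1"
  shows "conj_reflect \<sigma> (conj_reflect \<sigma> h) = h"
proof
  fix x
  have "complex_of_real \<sigma> * complex_of_real \<sigma> = 1"
    using assms by (metis abs_mult_self_eq mult_1 of_real_1 of_real_mult)
  then show "conj_reflect \<sigma> (conj_reflect \<sigma> h) x = h x"
    by (simp add: conj_reflect_def mult.assoc[symmetric])
qed

lemma conj_reflect_zero [simp]: "conj_reflect \<sigma> (\<lambda>x. 0) = (\<lambda>x. 0)"
  by (simp add: conj_reflect_def[abs_def])

lemma per2pi_conj_reflect:
  assumes "per2pi h"
  shows "per2pi (conj_reflect \<sigma> h)"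
  unfolding per2pi_def conj_reflect_def
proof
  fix x
  have "h (2*pi - (x + 2*pi) + 2*pi) = h (2*pi - (x + 2*pi))"
    using assms unfolding per2pi_def by blast
  then show "complex_of_real \<sigma> * cnj (h (2*pi - (x + 2*pi))) = complex_of_real \<sigma> * cnj (h (2*pi - x))"
    by simp
qed

lemma has_vector_derivative_conj_reflect:
  assumes "(F has_vector_derivative D) (at (2*pi - x))"
  shows "(conj_reflect \<sigma> F has_vector_derivative - complex_of_real \<sigma> * cnj D) (at x)"
proof -
  have "((\<lambda>x. 2*pi - x) has_vector_derivative -1) (at x)"
    by (auto intro!: derivative_eq_intros)
  from vector_diff_chain_at[OF this assms]
  have "((F \<circ> (\<lambda>x. 2*pi - x)) has_vector_derivative - D) (at x)" by simp
  from has_vector_derivative_mult_right[OF has_vector_derivative_cnj[OF this], of "complex_of_real \<sigma>"]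
  show ?thesis by (simp add: conj_reflect_def[abs_def] o_def)
qed

lemma has_integral_reflect_about_real:
  fixes f :: "real \<Rightarrow> 'a::real_normed_vector"
  shows "((\<lambda>s. f (c - s)) has_integral i) {c-b..c-a} \<longleftrightarrow> (f has_integral i) {a..b}"
proof -
  have "((\<lambda>s. f (c - s)) has_integral i) {c-b..c-a} \<longleftrightarrow> ((\<lambda>u. f (- u)) has_integral i) {-b..-a}"
    using has_integral_shift_Icc_real[of "\<lambda>u. f (- u)" "-c" i "c-b" "c-a"] by (simp add: o_def)
  also have "\<dots> \<longleftrightarrow> (f has_integral i) {a..b}"
    by (rule has_integral_reflect_real)
  finally show ?thesis .
qed

lemma integrable_reflect_about_real:
  fixes f :: "real \<Rightarrow> 'a::real_normed_vector"
  shows "(\<lambda>s. f (c - s)) integrable_on {c-b..c-a} \<longleftrightarrow> f integrable_on {a..b}"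
  by (simp add: integrable_on_def has_integral_reflect_about_real)

lemma integral_reflect_about_real:
  fixes f :: "real \<Rightarrow> 'a::real_normed_vector"
  shows "integral {c-b..c-a} (\<lambda>s. f (c - s)) = integral {a..b} f"
  by (simp add: integral_def has_integral_reflect_about_real integrable_reflect_about_real)

lemma negligible_reflect_about:
  assumes "negligible (N :: real set)"
  shows "negligible ((\<lambda>x. c - x) ` N)"
proof (rule negligible_locally_Lipschitz_image)
  fix x assume "x \<in> N"
  show "\<exists>T B. open T \<and> x \<in> T \<and> (\<forall>y\<in>N \<inter> T. norm ((c - y) - (c - x)) \<le> B * norm (y - x))"
    by (rule exI[of _ UNIV], rule exI[of _ 1]) (auto simp: norm_minus_commute)
qed (use assms in auto)

lemma ae_eq_conj_reflect:
  assumes "ae_eq u v"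
  shows "ae_eq (conj_reflect \<sigma> u) (conj_reflect \<sigma> v)"
proof -
  have "{x \<in> {0..2*pi}. conj_reflect \<sigma> u x \<noteq> conj_reflect \<sigma> v x}
      \<subseteq> (\<lambda>x. 2*pi - x) ` {x \<in> {0..2*pi}. u x \<noteq> v x}"
  proof
    fix y assume "y \<in> {x \<in> {0..2*pi}. conj_reflect \<sigma> u x \<noteq> conj_reflect \<sigma> v x}"
    then have "2*pi - y \<in> {x \<in> {0..2*pi}. u x \<noteq> v x}"
      by (auto simp: conj_reflect_def)
    then show "y \<in> (\<lambda>x. 2*pi - x) ` {x \<in> {0..2*pi}. u x \<noteq> v x}"
      by (rule rev_image_eqI) simp
  qed
  with assms show ?thesis
    unfolding ae_eq_def by (meson negligible_reflect_about negligible_subset)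
qed

lemma norm_conj_reflect_squared:
  "(\<lambda>x. (cmod (conj_reflect \<sigma> h x))^2) = (\<lambda>x. \<sigma>^2 * (cmod (h (2*pi - x)))^2)"
  by (simp add: conj_reflect_def norm_mult power_mult_distrib)

lemma L2norm_conj_reflect: "L2norm (conj_reflect \<sigma> h) = \<bar>\<sigma>\<bar> * L2norm h"
  using integral_reflect_about_real[where f="\<lambda>y. (cmod (h y))^2" and c="2*pi" and b="2*pi" and a=0]
  by (simp add: L2norm_def norm_conj_reflect_squared real_sqrt_mult)

lemma measurable_on_conj_reflect:
  assumes "h measurable_on {0..2*pi}"
  shows "conj_reflect \<sigma> h measurable_on {0..2*pi}"
proof -
  obtain N g where N: "negligible N" and g: "\<And>n. continuous_on UNIV (g n)"
    and lim: "\<And>x. x \<notin> N \<Longrightarrow> (\<lambda>n. g n x) \<longlonglongrightarrow> (if x \<in> {0..2*pi} then h x else 0)"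
    using assms unfolding measurable_on_def by blast
  show ?thesis unfolding measurable_on_def
  proof (intro exI conjI allI impI)
    show "negligible ((\<lambda>x. 2*pi - x) ` N)"
      using negligible_reflect_about[OF N] .
    show "continuous_on UNIV (conj_reflect \<sigma> (g n))" for n
      unfolding conj_reflect_def[abs_def]
      by (intro continuous_intros continuous_on_compose2[OF g[of n]]) auto
    fix x assume "x \<notin> (\<lambda>x. 2*pi - x) ` N"
    then have "2*pi - x \<notin> N" by force
    from tendsto_mult_left[OF tendsto_cnj[OF lim[OF this]], of "complex_of_real \<sigma>"]
    show "(\<lambda>n. conj_reflect \<sigma> (g n) x) \<longlonglongrightarrow> (if x \<in> {0..2*pi} then conj_reflect \<sigma> h x else 0)"
      by (auto simp: conj_reflect_def split: if_splits)
  qed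
qed

lemma L2T_conj_reflect:
  assumes "L2T h"
  shows "L2T (conj_reflect \<sigma> h)"
proof -
  have "(\<lambda>y. (cmod (h y))^2) integrable_on {0..2*pi}"
    using assms unfolding L2T_def by blast
  then have "(\<lambda>x. (cmod (h (2*pi - x)))^2) integrable_on {0..2*pi}"
    using integrable_reflect_about_real[where f="\<lambda>y. (cmod (h y))^2" and c="2*pi" and b="2*pi" and a=0]
    by simp
  then have "(\<lambda>x. (cmod (conj_reflect \<sigma> h x))^2) integrable_on {0..2*pi}"
    unfolding norm_conj_reflect_squared by (rule integrable_on_mult_right)
  with assms show ?thesis
    unfolding L2T_def using per2pi_conj_reflect measurable_on_conj_reflect by blast
qed

lemma H3T_conj_reflect:
  assumes "H3T f f1 f2 f3"
  shows "H3T (conj_reflect 1 f) (conj_reflect (-1) f1) (conj_reflect 1 f2) (conj_reflect (-1) f3)"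
proof -
  have f_per: "per2pi f" and f_deriv: "\<And>x. (f has_vector_derivative f1 x) (at x)"
    and f1_deriv: "\<And>x. (f1 has_vector_derivative f2 x) (at x)" and f3_L2: "L2T f3"
    and f3_integral: "\<And>x y. x \<le> y \<Longrightarrow> (f3 has_integral (f2 y - f2 x)) {x..y}"
    using assms unfolding H3T_def by blast+
  have "(conj_reflect 1 f has_vector_derivative conj_reflect (-1) f1 x) (at x)" for x
    using has_vector_derivative_conj_reflect[OF f_deriv[of "2*pi - x"], of 1] by (simp add: conj_reflect_def)
  moreover have "(conj_reflect (-1) f1 has_vector_derivative conj_reflect 1 f2 x) (at x)" for x
    using has_vector_derivative_conj_reflect[OF f1_deriv[of "2*pi - x"], of "-1"] by (simp add: conj_reflect_def)
  moreover have "(conj_reflect (-1) f3 has_integral (conj_reflect 1 f2 y - conj_reflect 1 f2 x)) {x..y}"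
    if "x \<le> y" for x y
  proof -
    have "((\<lambda>s. f3 (2*pi - s)) has_integral (f2 (2*pi - x) - f2 (2*pi - y))) {x..y}"
      using has_integral_reflect_about_real[where f=f3 and c="2*pi" and a="2*pi - y" and b="2*pi - x"] f3_integral that
      by simp
    from has_integral_neg[OF iffD2[OF has_integral_cnj this]]
    show ?thesis by (simp add: conj_reflect_def[abs_def] o_def)
  qed
  ultimately show ?thesis
    unfolding H3T_def using per2pi_conj_reflect[OF f_per] L2T_conj_reflect[OF f3_L2] by simp
qed

definition periodic_solution :: "real \<Rightarrow> (real \<Rightarrow> complex) \<Rightarrow> (real \<Rightarrow> complex) \<Rightarrow> bool" where
  "periodic_solution \<tau> h F \<longleftrightarrow> per2pi F \<and>
     (\<forall>x. (F has_vector_derivative (h x - \<i> * complex_of_real \<tau> * F x)) (at x))"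

lemma exp_2pi_tau_neq_1:
  assumes "\<tau> \<notin> \<int>"
  shows "exp (\<i> * complex_of_real \<tau> * complex_of_real (2*pi)) \<noteq> 1"
proof
  assume "exp (\<i> * complex_of_real \<tau> * complex_of_real (2*pi)) = 1"
  then obtain n :: int where "\<tau> * (2*pi) = of_int (2 * n) * pi"
    by (auto simp: exp_eq_1)
  then have "\<tau> = of_int n"
    by (simp add: field_simps)
  with assms show False
    by auto
qed

lemma has_vector_derivative_exp_i:
  "((\<lambda>x. exp (\<i> * complex_of_real \<tau> * complex_of_real x)) has_vector_derivative
     \<i> * complex_of_real \<tau> * exp (\<i> * complex_of_real \<tau> * complex_of_real x)) (at x)"
proof -
  have "((\<lambda>z. exp (\<i> * complex_of_real \<tau> * z)) has_field_derivative
      \<i> * complex_of_real \<tau> * exp (\<i> * complex_of_real \<tau> * complex_of_real x)) (at (complex_of_real x))"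
    by (auto intro!: derivative_eq_intros)
  then show ?thesis
    by (rule has_vector_derivative_real_field)
qed

lemma periodic_solution_unique:
  assumes "\<tau> \<notin> \<int>" and F: "periodic_solution \<tau> h F" and G: "periodic_solution \<tau> h G"
  shows "F = G"
proof -
  define e where "e x = exp (\<i> * complex_of_real \<tau> * complex_of_real x)" for x :: real
  define M where "M x = e x * (F x - G x)" for x
  have M_deriv: "(M has_vector_derivative 0) (at x within UNIV)" for x
  proof -
    have "(M has_vector_derivative e x * ((h x - \<i> * complex_of_real \<tau> * F x) - (h x - \<i> * complex_of_real \<tau> * G x))
        + \<i> * complex_of_real \<tau> * e x * (F x - G x)) (at x)"
      using F G unfolding M_def e_def periodic_solution_def
      by (intro has_vector_derivative_mult has_vector_derivative_diff has_vector_derivative_exp_i) auto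
    then show ?thesis
      by (simp add: algebra_simps)
  qed
  obtain C where C: "\<And>x. M x = C"
    using has_vector_derivative_zero_constant[OF convex_UNIV M_deriv] by (metis UNIV_I)
  have "F (0 + 2*pi) = F 0" "G (0 + 2*pi) = G 0"
    using F G unfolding periodic_solution_def per2pi_def by blast+
  then have "(e (2*pi) - 1) * (F 0 - G 0) = M (2*pi) - M 0"
    by (simp add: M_def e_def algebra_simps)
  moreover have "e (2*pi) \<noteq> 1"
    using exp_2pi_tau_neq_1[OF assms(1)] by (simp add: e_def)
  ultimately have "C = 0"
    using C[of 0] C[of "2*pi"] by (simp add: M_def)
  moreover have "e x \<noteq> 0" for x
    by (simp add: e_def)
  ultimately show "F = G"
    using C by (auto simp: M_def)
qed

lemma antiderivative_shift_2pi:
  assumes h_per: "per2pi h"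
    and G: "\<And>x. (G has_vector_derivative exp (\<i> * complex_of_real \<tau> * complex_of_real x) * h x) (at x)"
  obtains K where "\<And>x. G (x + 2*pi) = exp (\<i> * complex_of_real \<tau> * complex_of_real (2*pi)) * G x + K"
proof -
  define q where "q = exp (\<i> * complex_of_real \<tau> * complex_of_real (2*pi))"
  have K_deriv: "((\<lambda>x. G (x + 2*pi) - q * G x) has_vector_derivative 0) (at x within UNIV)" for x
  proof -
    have "((\<lambda>x. x + 2*pi) has_vector_derivative 1) (at x)"
      by (auto intro!: derivative_eq_intros)
    from vector_diff_chain_at[OF this G]
    have "((\<lambda>x. G (x + 2*pi)) has_vector_derivative
        exp (\<i> * complex_of_real \<tau> * complex_of_real (x + 2*pi)) * h (x + 2*pi)) (at x)"
      by (simp add: o_def)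
    from has_vector_derivative_diff[OF this has_vector_derivative_mult_right[OF G, of q]]
    show ?thesis
      using h_per by (simp add: q_def per2pi_def distrib_left exp_add algebra_simps)
  qed
  obtain K where "\<And>x. G (x + 2*pi) - q * G x = K"
    using has_vector_derivative_zero_constant[OF convex_UNIV K_deriv] by (metis UNIV_I)
  then have "G (x + 2*pi) = q * G x + K" for x
    by (metis add.commute diff_eq_eq)
  with that show ?thesis
    unfolding q_def by blast
qed

text \<open>Variation of constants: with e(x) = exp(i tau x) and G' = e h, the solutions are
  F = (C + G) / e, and C is fixed by periodicity since e(2 pi) differs from 1.\<close>
lemma periodic_solution_exists:
  assumes "\<tau> \<notin> \<int>" and h_per: "per2pi h" and h_cont: "continuous_on UNIV h"
  shows "\<exists>F. periodic_solution \<tau> h F"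
proof -
  define e where "e s x = exp (\<i> * complex_of_real s * complex_of_real x)" for s x :: real
  define q where "q = e \<tau> (2*pi)"
  have e_add: "e s (x + y) = e s x * e s y" for s x y
    by (simp add: e_def distrib_left exp_add)
  have e_inverse: "e (-s) x * e s x = 1" for s x
    by (simp add: e_def exp_add[symmetric])
  have "isCont (\<lambda>x. e \<tau> x * h x) x" for x
    using h_cont unfolding e_def by (intro continuous_intros) (simp add: continuous_on_eq_continuous_at)
  then obtain G where G: "\<And>x. (G has_vector_derivative e \<tau> x * h x) (at x)"
    using einterval_antiderivative[of "-\<infinity>" "\<infinity>" "\<lambda>x. e \<tau> x * h x"] by auto
  obtain K where K: "\<And>x. G (x + 2*pi) = q * G x + K"
    using antiderivative_shift_2pi[OF h_per G[unfolded e_def]] unfolding q_def e_def by blast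
  have "q \<noteq> 1"
    using exp_2pi_tau_neq_1[OF assms(1)] by (simp add: q_def e_def)
  define C where "C = K / (q - 1)"
  define F where "F x = e (-\<tau>) x * (C + G x)" for x
  have "per2pi F"
    unfolding per2pi_def
  proof
    fix x
    have "C + G (x + 2*pi) = q * (C + G x)"
      using K[of x] \<open>q \<noteq> 1\<close> by (simp add: C_def field_simps)
    then show "F (x + 2*pi) = F x"
      using e_inverse[of \<tau> "2*pi"] by (simp add: F_def e_add q_def algebra_simps)
  qed
  moreover have "(F has_vector_derivative h x - \<i> * complex_of_real \<tau> * F x) (at x)" for x
  proof -
    have "((\<lambda>x. C + G x) has_vector_derivative e \<tau> x * h x) (at x)"
      using has_vector_derivative_add[OF has_vector_derivative_const G] by simp
    from has_vector_derivative_mult[OF has_vector_derivative_exp_i[of "-\<tau>" x] this]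
    have "(F has_vector_derivative e (-\<tau>) x * (e \<tau> x * h x) + \<i> * complex_of_real (-\<tau>) * e (-\<tau>) x * (C + G x)) (at x)"
      by (simp add: F_def[abs_def] e_def)
    then show ?thesis
      using e_inverse[of \<tau> x] by (simp add: F_def algebra_simps)
  qed
  ultimately show ?thesis
    unfolding periodic_solution_def by blast
qed

lemma Dinv_eqI:
  assumes "\<tau> \<notin> \<int>" and "periodic_solution \<tau> h F"
  shows "Dinv \<tau> h = F"
  unfolding Dinv_def periodic_solution_def[symmetric]
  using assms periodic_solution_unique by blast

lemma periodic_solution_Dinv:
  assumes "\<tau> \<notin> \<int>" and "per2pi h" and "continuous_on UNIV h"
  shows "periodic_solution \<tau> h (Dinv \<tau> h)"
  using periodic_solution_exists[OF assms] Dinv_eqI[OF assms(1)] by blast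

lemma periodic_solution_conj_reflect:
  assumes "periodic_solution \<tau> h F"
  shows "periodic_solution \<tau> (conj_reflect \<sigma> h) (conj_reflect (-\<sigma>) F)"
  unfolding periodic_solution_def
proof (intro conjI allI)
  show "per2pi (conj_reflect (-\<sigma>) F)"
    using assms per2pi_conj_reflect unfolding periodic_solution_def by blast
  fix x
  have "(F has_vector_derivative h (2*pi - x) - \<i> * complex_of_real \<tau> * F (2*pi - x)) (at (2*pi - x))"
    using assms unfolding periodic_solution_def by blast
  from has_vector_derivative_conj_reflect[OF this, of "-\<sigma>"]
  show "(conj_reflect (-\<sigma>) F has_vector_derivative
      conj_reflect \<sigma> h x - \<i> * complex_of_real \<tau> * conj_reflect (-\<sigma>) F x) (at x)"
    by (simp add: conj_reflect_def algebra_simps)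
qed

lemma Dinv_conj_reflect:
  assumes "\<tau> \<notin> \<int>" and "per2pi h" and "continuous_on UNIV h"
  shows "Dinv \<tau> (conj_reflect \<sigma> h) = conj_reflect (-\<sigma>) (Dinv \<tau> h)"
  using Dinv_eqI[OF assms(1) periodic_solution_conj_reflect[OF periodic_solution_Dinv[OF assms]]] .

lemma even_per2pi_reflect:
  assumes "per2pi w" and "\<And>z. w (- z) = w z"
  shows "w (2*pi - x) = w x"
  using assms unfolding per2pi_def by (metis uminus_add_conv_diff)

lemma deriv_reflect_about:
  fixes w :: "real \<Rightarrow> real"
  assumes sym: "\<And>x. w (c - x) = w x" and diff: "\<And>x. w differentiable at x"
  shows "deriv w (c - x) = - deriv w x"
proof -
  have "(w has_real_derivative deriv w (c - x)) (at (c - x))"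
    using diff by (simp add: DERIV_deriv_iff_real_differentiable)
  moreover have "((\<lambda>y. c - y) has_real_derivative -1) (at x)"
    by (auto intro!: derivative_eq_intros)
  ultimately have "((\<lambda>y. w (c - y)) has_real_derivative deriv w (c - x) * -1) (at x)"
    by (rule DERIV_chain2)
  then have "(w has_real_derivative - deriv w (c - x)) (at x)"
    using sym by simp
  then show ?thesis
    by (simp add: DERIV_imp_deriv)
qed

lemma smooth_fun_differentiable:
  assumes "smooth_fun w"
  shows "w differentiable at x"
proof -
  obtain D where "D 0 = w" and "\<And>n x. (D n has_real_derivative D (Suc n) x) (at x)"
    using assms unfolding smooth_fun_def by blast
  then show ?thesis
    using real_differentiable_def by metis
qed

lemma Hop_conj_reflect:
  assumes "\<And>x. w (2*pi - x) = w x" and "\<And>x. deriv w (2*pi - x) = - deriv w x"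
    and "Dinv \<tau> (conj_reflect 1 f) = conj_reflect (-1) (Dinv \<tau> f)"
  shows "Hop k c \<rho> \<phi> \<gamma> w \<tau> (conj_reflect 1 f) (conj_reflect (-1) f1) (conj_reflect 1 f2) (conj_reflect (-1) f3) x
      - (- cnj \<mu>) * conj_reflect 1 f x
    = conj_reflect (-1) (\<lambda>x. Hop k c \<rho> \<phi> \<gamma> w \<tau> f f1 f2 f3 x - \<mu> * f x) x"
proof -
  have "w x = w (2*pi - x)" and "deriv w x = - deriv w (2*pi - x)"
    using assms(1,2)[of x] by simp_all
  then show ?thesis
    unfolding Hop_def Let_def assms(3) conj_reflect_def
    by (simp add: algebra_simps power2_eq_square power3_eq_cube)
qed

lemma H3T_continuous:
  assumes "H3T f f1 f2 f3"
  shows "continuous_on UNIV f"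
  using assms unfolding H3T_def
  by (meson continuous_at_imp_continuous_on has_vector_derivative_continuous)

lemma Hop_residual_conj_reflect:
  assumes "\<tau> \<notin> \<int>" and "\<And>x. w (2*pi - x) = w x" and "\<And>x. deriv w (2*pi - x) = - deriv w x"
    and f: "H3T f f1 f2 f3"
  shows "(\<lambda>x. Hop k c \<rho> \<phi> \<gamma> w \<tau> (conj_reflect 1 f) (conj_reflect (-1) f1) (conj_reflect 1 f2) (conj_reflect (-1) f3) x
      - (- cnj \<mu>) * conj_reflect 1 f x)
    = conj_reflect (-1) (\<lambda>x. Hop k c \<rho> \<phi> \<gamma> w \<tau> f f1 f2 f3 x - \<mu> * f x)"
proof -
  have "per2pi f"
    using f unfolding H3T_def by blast
  from Dinv_conj_reflect[OF assms(1) this H3T_continuous[OF f], of 1]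
  show ?thesis
    using Hop_conj_reflect[OF assms(2,3)] by auto
qed

lemma resolvent_H_neg_cnj:
  assumes "\<tau> \<notin> \<int>" and "\<And>x. w (2*pi - x) = w x" and "\<And>x. deriv w (2*pi - x) = - deriv w x"
    and \<nu>: "\<nu> \<in> resolvent_H k c \<rho> \<phi> \<gamma> w \<tau>"
  shows "- cnj \<nu> \<in> resolvent_H k c \<rho> \<phi> \<gamma> w \<tau>"
proof -
  let ?R = "\<lambda>\<mu> f f1 f2 f3 x. Hop k c \<rho> \<phi> \<gamma> w \<tau> f f1 f2 f3 x - \<mu> * f x"
  have residual: "?R (- cnj \<mu>) (conj_reflect 1 f) (conj_reflect (-1) f1) (conj_reflect 1 f2) (conj_reflect (-1) f3)
      = conj_reflect (-1) (?R \<mu> f f1 f2 f3)" if "H3T f f1 f2 f3" for \<mu> f f1 f2 f3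
    using Hop_residual_conj_reflect[OF assms(1-3) that] .
  have onto: "\<And>g. L2T g \<Longrightarrow> \<exists>f f1 f2 f3. H3T f f1 f2 f3 \<and> ae_eq (?R \<nu> f f1 f2 f3) g"
   and inj: "\<And>f f1 f2 f3. H3T f f1 f2 f3 \<Longrightarrow> ae_eq (?R \<nu> f f1 f2 f3) (\<lambda>x. 0) \<Longrightarrow> ae_eq f (\<lambda>x. 0)"
   and "\<exists>C. \<forall>f f1 f2 f3. H3T f f1 f2 f3 \<longrightarrow> L2norm f \<le> C * L2norm (?R \<nu> f f1 f2 f3)"
    using \<nu> unfolding resolvent_H_def by blast+
  then obtain C where bound: "\<And>f f1 f2 f3. H3T f f1 f2 f3 \<Longrightarrow> L2norm f \<le> C * L2norm (?R \<nu> f f1 f2 f3)"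
    by blast
  have "\<exists>f f1 f2 f3. H3T f f1 f2 f3 \<and> ae_eq (?R (- cnj \<nu>) f f1 f2 f3) g" if g: "L2T g" for g
  proof -
    obtain f f1 f2 f3 where f: "H3T f f1 f2 f3" and fg: "ae_eq (?R \<nu> f f1 f2 f3) (conj_reflect (-1) g)"
      using onto[OF L2T_conj_reflect[OF g]] by blast
    have "ae_eq (?R (- cnj \<nu>) (conj_reflect 1 f) (conj_reflect (-1) f1) (conj_reflect 1 f2) (conj_reflect (-1) f3)) g"
      unfolding residual[OF f]
      using ae_eq_conj_reflect[OF fg, of "-1"] by (simp add: conj_reflect_conj_reflect)
    with H3T_conj_reflect[OF f] show ?thesis
      by blast
  qed
  moreover have "ae_eq f (\<lambda>x. 0)"
    if f: "H3T f f1 f2 f3" and "ae_eq (?R (- cnj \<nu>) f f1 f2 f3) (\<lambda>x. 0)" for f f1 f2 f3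
  proof -
    have "ae_eq (?R \<nu> (conj_reflect 1 f) (conj_reflect (-1) f1) (conj_reflect 1 f2) (conj_reflect (-1) f3)) (\<lambda>x. 0)"
      using ae_eq_conj_reflect[OF that(2), of "-1"] residual[OF f, of "- cnj \<nu>"] by simp
    then have "ae_eq (conj_reflect 1 f) (\<lambda>x. 0)"
      using inj[OF H3T_conj_reflect[OF f]] by blast
    from ae_eq_conj_reflect[OF this, of 1] show ?thesis
      by (simp add: conj_reflect_conj_reflect)
  qed
  moreover have "L2norm f \<le> C * L2norm (?R (- cnj \<nu>) f f1 f2 f3)" if f: "H3T f f1 f2 f3" for f f1 f2 f3
    using bound[OF H3T_conj_reflect[OF f]] residual[OF f, of "- cnj \<nu>"]
    by (simp add: L2norm_conj_reflect)
  ultimately show ?thesis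
    unfolding resolvent_H_def by blast
qed

lemma spectrum_H_neg_cnj:
  assumes "\<tau> \<notin> \<int>" and "\<And>x. w (2*pi - x) = w x" and "\<And>x. deriv w (2*pi - x) = - deriv w x"
    and "\<mu> \<in> spectrum_H k c \<rho> \<phi> \<gamma> w \<tau>"
  shows "- cnj \<mu> \<in> spectrum_H k c \<rho> \<phi> \<gamma> w \<tau>"
  using assms resolvent_H_neg_cnj[OF assms(1-3), of "- cnj \<mu>"]
  by (auto simp: spectrum_H_def)

theorem lemma2p4:
  fixes k \<rho> \<phi> \<gamma> :: real
    and w :: "real \<Rightarrow> real \<Rightarrow> real" \<comment> \<open>w a z: the wave profile of amplitude a\<close>
    and c :: "real \<Rightarrow> real" \<comment> \<open>c a: its speed\<close>
  assumes k_pos: "k > 0"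
    and w_smooth: "\<And>a. smooth_fun (w a)"
    and w_per: "\<And>a. per2pi (w a)"
    and w_even: "\<And>a z. w a (- z) = w a z"
    and w_exp: "\<exists>C a0. a0 > 0 \<and> (\<forall>a z. \<bar>a\<bar> < a0 \<longrightarrow>
        \<bar>w a z - (a * cos z + a^2 * (- 3 * \<rho> / (2 * k^2) + \<rho> / (2 * k^2) * cos (2 * z))
           + a^3 * (- (\<phi>^2) / (64 * k^2) + 3 * \<rho>^2 / (16 * k^4)) * cos (3 * z))\<bar> \<le> C * a^4)"
    and c_exp: "\<exists>C a0. a0 > 0 \<and> (\<forall>a. \<bar>a\<bar> < a0 \<longrightarrow>
        \<bar>c a - (k^2 + a^2 * (3 * \<phi>^2 / 8 + 15 * \<rho>^2 / (2 * k^2)))\<bar> \<le> C * a^4)"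
  shows "\<exists>\<epsilon>>0. \<forall>a. \<bar>a\<bar> < \<epsilon> \<longrightarrow>
     (\<forall>\<tau>. -1/2 < \<tau> \<and> \<tau> \<le> 1/2 \<and> \<tau> \<noteq> 0 \<longrightarrow>
       (\<forall>\<mu>. \<mu> \<in> spectrum_H k (c a) \<rho> \<phi> \<gamma> (w a) \<tau> \<longrightarrow>
             - cnj \<mu> \<in> spectrum_H k (c a) \<rho> \<phi> \<gamma> (w a) \<tau>))"
proof (intro exI[of _ 1] conjI allI impI)
  fix a \<tau> \<mu>
  assume \<tau>: "-1/2 < \<tau> \<and> \<tau> \<le> 1/2 \<and> \<tau> \<noteq> 0"
    and \<mu>: "\<mu> \<in> spectrum_H k (c a) \<rho> \<phi> \<gamma> (w a) \<tau>"
  have "\<tau> \<notin> \<int>"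
    using \<tau> by (auto elim!: Ints_cases)
  have w_reflect: "w a (2*pi - x) = w a x" for x
    using even_per2pi_reflect w_per w_even by blast
  have w'_reflect: "deriv (w a) (2*pi - x) = - deriv (w a) x" for x
    using deriv_reflect_about[OF w_reflect smooth_fun_differentiable[OF w_smooth]] .
  show "- cnj \<mu> \<in> spectrum_H k (c a) \<rho> \<phi> \<gamma> (w a) \<tau>"
    using spectrum_H_neg_cnj[OF \<open>\<tau> \<notin> \<int>\<close> w_reflect w'_reflect \<mu>] .
qed simp

end
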